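(* Let $\mathcal G\le\mathcal T$ and $\mathcal I$ be as in the context, with $\mathcal G$ acting on $\mathcal I$ by $(a_{ij})\cdot C_A=C_{(a_{ij})\cdot A}$. Form the semidirect products $U(M(\rho,k))\rtimes\mathcal T$ with multiplication $(A,a)(B,b)=(A\,(a\cdot B),ab)$ and $\mathcal I\rtimes\mathcal G$ with multiplication $(C_A,a)(C_B,b)=(C_AC_{a\cdot B},ab)$, and let $D_0=\{({\rm diag}(d_1,\dots,d_n),(d_i^{-1}d_j)_{i\rho j}) : d_i\in k^*\}$, a normal subgroup of $U(M(\rho,k))\rtimes\mathcal T$. Then the map $\Psi:\mathcal I\rtimes\mathcal G\to (U(M(\rho,k))\rtimes\mathcal T)/D_0$, $\Psi(C_A,(a_{ij}))=\overline{(A,(a_{ij}))}$, is well defined and is a group isomorphism.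
   Context: Let $k$ be a field, $n\ge1$, $\rho$ a preorder on $\{1,\dots,n\}$, $M(\rho,k)$ the subalgebra of $M_n(k)$ of matrices with $(i,j)$-entry $0$ whenever $(i,j)\notin\rho$, $U(M(\rho,k))$ its unit group. $i\sim j$ iff $i\rho j$ and $j\rho i$; $\mathcal C$ is the set of classes, $\hat i$ the class of $i$, ordered by $\hat i\le\hat j$ iff $i\rho j$. $\mathcal T$ is the group (entrywise product) of families $(a_{ij})_{i\rho j}$ in $k^*$ with $a_{ij}a_{jr}=a_{ir}$ whenever $i\rho j$, $j\rho r$; for $(a_{ij})\in\mathcal T$ and $A=(\alpha_{ij})\in M(\rho,k)$, $(a_{ij})\cdot A$ has $(i,j)$-entry $a_{ij}\alpha_{ij}$ if $i\rho j$ and $0$ otherwise. A class $\alpha\in\mathcal C$ is isolated if $\alpha\le\beta$ or $\beta\le\alpha$ implies $\beta=\alpha$. $\Delta$ is the undirected graph whose vertices are the $i\in\{1,\dots,n\}$ with $\hat i$ not isolated, with an edge between $i,j$ iff $\hat i\neq\hat j$ and $\hat i,\hat j$ are comparable. Let $\Delta_1,\dots,\Delta_z$ be its connected components and choose a spanning tree $T_\ell$ of each $\Delta_\ell$. $\mathcal G$ is the subgroup of $\mathcal T$ of those $(a_{ij})_{i\rho j}$ with $a_{ij}=1$ whenever $i\rho j$ and either $i,j$ are joined by an edge of some $T_\ell$, or $i,j$ both lie in the same isolated class. $\mathcal I=\{C_A : A\in U(M(\rho,k))\}$ with $C_A(X)=AXA^{-1}$ is the group of inner automorphisms of $M(\rho,k)$.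 $\overline{y}$ denotes the class modulo $D_0$. *)

theory Defs
  imports "HOL-Algebra.Coset"
begin

type_synonym 'a mat = "nat \<Rightarrow> nat \<Rightarrow> 'a"

text \<open>Matrices are functions nat => nat => 'a, indices 1..n, zero outside.\<close>

definition rho_preorder :: "nat \<Rightarrow> (nat \<times> nat) set \<Rightarrow> bool" where
  "rho_preorder n \<rho> \<longleftrightarrow> \<rho> \<subseteq> {1..n} \<times> {1..n} \<and> refl_on {1..n} \<rho> \<and> trans \<rho>"

definition mmult :: "nat \<Rightarrow> 'a::field mat \<Rightarrow> 'a mat \<Rightarrow> 'a mat" where
  "mmult n A B = (\<lambda>i j. if i \<in> {1..n} \<and> j \<in> {1..n} then (\<Sum>l=1..n. A i l * B l j) else 0)"

definition mone :: "nat \<Rightarrow> 'a::field mat" where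
  "mone n = (\<lambda>i j. if i = j \<and> i \<in> {1..n} then 1 else 0)"

definition diagm :: "nat \<Rightarrow> (nat \<Rightarrow> 'a::field) \<Rightarrow> 'a mat" where
  "diagm n d = (\<lambda>i j. if i = j \<and> i \<in> {1..n} then d i else 0)"

definition Mrho :: "(nat \<times> nat) set \<Rightarrow> 'a::field mat set" where
  "Mrho \<rho> = {A. \<forall>i j. (i, j) \<notin> \<rho> \<longrightarrow> A i j = 0}"

definition RUnits :: "nat \<Rightarrow> (nat \<times> nat) set \<Rightarrow> 'a::field mat set" where
  "RUnits n \<rho> = {A \<in> Mrho \<rho>. \<exists>B \<in> Mrho \<rho>. mmult n A B = mone n \<and> mmult n B A = mone n}"

definition minv :: "nat \<Rightarrow> (nat \<times> nat) set \<Rightarrow> 'a::field mat \<Rightarrow> 'a mat" where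
  "minv n \<rho> A = (SOME B. B \<in> Mrho \<rho> \<and> mmult n A B = mone n \<and> mmult n B A = mone n)"

definition Cinn :: "nat \<Rightarrow> (nat \<times> nat) set \<Rightarrow> 'a::field mat \<Rightarrow> ('a mat \<Rightarrow> 'a mat)" where
  "Cinn n \<rho> A = restrict (\<lambda>X. mmult n (mmult n A X) (minv n \<rho> A)) (Mrho \<rho>)"

definition Inn :: "nat \<Rightarrow> (nat \<times> nat) set \<Rightarrow> ('a::field mat \<Rightarrow> 'a mat) set" where
  "Inn n \<rho> = Cinn n \<rho> ` RUnits n \<rho>"

text \<open>The group T: families (a_ij) indexed by rho in k^*, multiplicative;
  represented as functions with value 1 outside rho.\<close>
definition Tgrp :: "(nat \<times> nat) set \<Rightarrow> 'a::field mat set" where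
  "Tgrp \<rho> = {a. (\<forall>i j. (i, j) \<in> \<rho> \<longrightarrow> a i j \<noteq> 0) \<and> (\<forall>i j. (i, j) \<notin> \<rho> \<longrightarrow> a i j = 1)
      \<and> (\<forall>i j r. (i, j) \<in> \<rho> \<longrightarrow> (j, r) \<in> \<rho> \<longrightarrow> a i j * a j r = a i r)}"

definition fmul :: "'a::field mat \<Rightarrow> 'a mat \<Rightarrow> 'a mat" where
  "fmul a b = (\<lambda>i j. a i j * b i j)"

definition act :: "(nat \<times> nat) set \<Rightarrow> 'a::field mat \<Rightarrow> 'a mat \<Rightarrow> 'a mat" where
  "act \<rho> a A = (\<lambda>i j. if (i, j) \<in> \<rho> then a i j * A i j else 0)"

definition equivr :: "(nat \<times> nat) set \<Rightarrow> nat \<Rightarrow> nat \<Rightarrow> bool" where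
  "equivr \<rho> i j \<longleftrightarrow> (i, j) \<in> \<rho> \<and> (j, i) \<in> \<rho>"

definition isolated :: "nat \<Rightarrow> (nat \<times> nat) set \<Rightarrow> nat \<Rightarrow> bool" where
  "isolated n \<rho> i \<longleftrightarrow> (\<forall>j \<in> {1..n}. ((i, j) \<in> \<rho> \<or> (j, i) \<in> \<rho>) \<longrightarrow> equivr \<rho> i j)"

definition DeltaV :: "nat \<Rightarrow> (nat \<times> nat) set \<Rightarrow> nat set" where
  "DeltaV n \<rho> = {i \<in> {1..n}. \<not> isolated n \<rho> i}"

definition DeltaE :: "nat \<Rightarrow> (nat \<times> nat) set \<Rightarrow> (nat \<times> nat) set" where
  "DeltaE n \<rho> = {(i, j). i \<in> DeltaV n \<rho> \<and> j \<in> DeltaV n \<rho> \<and> \<not> equivr \<rho> i j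
      \<and> ((i, j) \<in> \<rho> \<or> (j, i) \<in> \<rho>)}"

text \<open>F is the union of spanning trees of the connected components of Delta, i.e. a
  spanning forest: a symmetric subset of the edges with the same connectivity as Delta
  in which every edge is a bridge (so F has no cycles).\<close>
definition spanning_forest :: "nat \<Rightarrow> (nat \<times> nat) set \<Rightarrow> (nat \<times> nat) set \<Rightarrow> bool" where
  "spanning_forest n \<rho> F \<longleftrightarrow> F \<subseteq> DeltaE n \<rho> \<and> sym F
     \<and> (\<forall>i \<in> DeltaV n \<rho>. \<forall>j \<in> DeltaV n \<rho>. (i, j) \<in> F\<^sup>* \<longleftrightarrow> (i, j) \<in> (DeltaE n \<rho>)\<^sup>*)
     \<and> (\<forall>(i, j) \<in> F. (i, j) \<notin> (F - {(i, j), (j, i)})\<^sup>*)"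

definition Ggrp :: "nat \<Rightarrow> (nat \<times> nat) set \<Rightarrow> (nat \<times> nat) set \<Rightarrow> 'a::field mat set" where
  "Ggrp n \<rho> F = {a \<in> Tgrp \<rho>. \<forall>i j. (i, j) \<in> \<rho> \<longrightarrow>
      ((i, j) \<in> F \<or> (isolated n \<rho> i \<and> equivr \<rho> i j)) \<longrightarrow> a i j = 1}"

definition actI :: "nat \<Rightarrow> (nat \<times> nat) set \<Rightarrow> 'a::field mat \<Rightarrow> ('a mat \<Rightarrow> 'a mat) \<Rightarrow> ('a mat \<Rightarrow> 'a mat)" where
  "actI n \<rho> a f = Cinn n \<rho> (act \<rho> a (SOME A. A \<in> RUnits n \<rho> \<and> f = Cinn n \<rho> A))"

definition UT :: "nat \<Rightarrow> (nat \<times> nat) set \<Rightarrow> ('a::field mat \<times> 'a mat) monoid" where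
  "UT n \<rho> = \<lparr>carrier = RUnits n \<rho> \<times> Tgrp \<rho>,
     mult = (\<lambda>(A, a) (B, b). (mmult n A (act \<rho> a B), fmul a b)),
     one = (mone n, \<lambda>i j. 1)\<rparr>"

definition IG :: "nat \<Rightarrow> (nat \<times> nat) set \<Rightarrow> (nat \<times> nat) set \<Rightarrow> (('a::field mat \<Rightarrow> 'a mat) \<times> 'a mat) monoid" where
  "IG n \<rho> F = \<lparr>carrier = Inn n \<rho> \<times> Ggrp n \<rho> F,
     mult = (\<lambda>(f, a) (g, b). (compose (Mrho \<rho>) f (actI n \<rho> a g), fmul a b)),
     one = (Cinn n \<rho> (mone n), \<lambda>i j. 1)\<rparr>"

definition D0 :: "nat \<Rightarrow> (nat \<times> nat) set \<Rightarrow> ('a::field mat \<times> 'a mat) set" where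
  "D0 n \<rho> = {(diagm n d, \<lambda>i j. if (i, j) \<in> \<rho> then inverse (d i) * d j else 1) | d.
      \<forall>i \<in> {1..n}. d i \<noteq> 0}"

definition Psi :: "nat \<Rightarrow> (nat \<times> nat) set \<Rightarrow> ('a::field mat \<Rightarrow> 'a mat) \<times> 'a mat \<Rightarrow> ('a mat \<times> 'a mat) set" where
  "Psi n \<rho> = (\<lambda>(f, a). D0 n \<rho> #>\<^bsub>UT n \<rho>\<^esub> ((SOME A. A \<in> RUnits n \<rho> \<and> f = Cinn n \<rho> A), a))"

end

theory Submission
  imports Defs
begin

text \<open>
  An element \<open>(diag(d), (d\<^sub>i\<^sup>-\<^sup>1 d\<^sub>j))\<close> of \<open>D\<^sub>0\<close> is central in \<open>U(M(\<rho>,k)) \<rtimes> \<T>\<close>: multiplying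
  \<open>(A, a)\<close> by it on either side replaces \<open>A\<close> by \<open>A diag(d)\<close> and \<open>a\<close> by \<open>a\<close> times the coboundary
  \<open>(d\<^sub>i\<^sup>-\<^sup>1 d\<^sub>j)\<close>. Hence \<open>D\<^sub>0\<close> is normal, and two pairs lie in the same coset exactly when they
  differ in this way.

  If \<open>C\<^sub>A = C\<^sub>B\<close> then \<open>B\<^sup>-\<^sup>1A\<close> is central in \<open>M(\<rho>,k)\<close>, hence a diagonal matrix whose entries are
  constant along \<open>\<rho>\<close>; its coboundary is trivial, so \<open>\<Psi>\<close> is well defined, and it is a
  homomorphism because \<open>C\<^sub>A C\<^sub>a\<^sub>\<cdot>\<^sub>B = C\<^sub>A\<^sub>(\<^sub>a\<^sub>\<cdot>\<^sub>B\<^sub>)\<close>. If \<open>\<Psi>(C\<^sub>A, a) = \<Psi>(C\<^sub>B, b)\<close> with \<open>a, b \<in> \<G>\<close>, so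
  that \<open>A = B diag(d)\<close> and \<open>a = b (d\<^sub>i\<^sup>-\<^sup>1 d\<^sub>j)\<close>, then \<open>d\<^sub>i = d\<^sub>j\<close> on the tree edges and inside the
  isolated classes; as the spanning forest connects any two comparable non-isolated classes,
  \<open>d\<close> is constant along all of \<open>\<rho>\<close>, so \<open>a = b\<close> and \<open>C\<^sub>A = C\<^sub>B\<close>. For surjectivity every \<open>a \<in> \<T>\<close>
  is made trivial at these positions by a coboundary: on a forest \<open>d\<^sub>j = d\<^sub>i a\<^sub>i\<^sub>j\<close> can be
  solved edge by edge since every edge is a bridge, and on a class one takes the row of \<open>a\<close>
  at a fixed representative.
\<close>

section \<open>Potentials on forests\<close>

definition forest :: "('v \<times> 'v) set \<Rightarrow> bool" where
  "forest F \<longleftrightarrow> sym F \<and> (\<forall>(i, j) \<in> F. (i, j) \<notin> (F - {(i, j), (j, i)})\<^sup>*)"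

lemma forest_subset:
  assumes "forest F" "F' \<subseteq> F" "sym F'"
  shows "forest F'"
  unfolding forest_def
proof (intro conjI ballI, fact, clarify)
  fix i j assume ij: "(i, j) \<in> F'" "(i, j) \<in> (F' - {(i, j), (j, i)})\<^sup>*"
  have "(F' - {(i, j), (j, i)})\<^sup>* \<subseteq> (F - {(i, j), (j, i)})\<^sup>*"
    using assms(2) by (intro rtrancl_mono) blast
  then show False using ij assms(1,2) unfolding forest_def by blast
qed

lemma sym_rtrancl_step_iff: "sym E \<Longrightarrow> (u, v) \<in> E \<Longrightarrow> (w, u) \<in> E\<^sup>* \<longleftrightarrow> (w, v) \<in> E\<^sup>*"
  by (meson rtrancl.rtrancl_into_rtrancl symD)

lemma potential_add_bridge:
  fixes w :: "'v \<Rightarrow> 'v \<Rightarrow> 'a::field"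
  assumes E: "sym E" and bridge: "(i, j) \<notin> E\<^sup>*"
    and w: "w i j \<noteq> 0" "w j i = inverse (w i j)"
    and d': "\<forall>v. d' v \<noteq> 0" "\<forall>(u, v) \<in> E. d' v = d' u * w u v"
  shows "\<exists>d. (\<forall>v. d v \<noteq> 0) \<and> (\<forall>(u, v) \<in> insert (i, j) (insert (j, i) E). d v = d u * w u v)"
proof -
  define R where "R = {v. (j, v) \<in> E\<^sup>*}"
  have iR: "i \<notin> R"
    using bridge sym_rtrancl[OF E] unfolding R_def sym_def by blast
  have jR: "j \<in> R" unfolding R_def by simp
  have closed: "u \<in> R \<longleftrightarrow> v \<in> R" if "(u, v) \<in> E" for u v
    unfolding R_def using sym_rtrancl_step_iff[OF E that] by simp
  \<comment> \<open>Both ends of an edge of \<open>E\<close> lie on the same side of the bridge, so rescaling the side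
    of \<open>j\<close> by \<open>c\<close> only affects the bridge itself.\<close>
  define c where "c = d' i * w i j / d' j"
  define d where "d v = (if v \<in> R then c * d' v else d' v)" for v
  have "d v = d u * w u v" if "(u, v) \<in> E" for u v
    using closed[OF that] d'(2) that unfolding d_def by auto
  moreover have "d j = d i * w i j" using iR jR d'(1) unfolding d_def c_def by simp
  moreover have "d i = d j * w j i" using iR jR d'(1) w unfolding d_def c_def by (simp add: field_simps)
  moreover have "\<forall>v. d v \<noteq> 0" using d' w unfolding d_def c_def by auto
  ultimately show ?thesis by blast
qed

lemma forest_potential:
  fixes w :: "'v \<Rightarrow> 'v \<Rightarrow> 'a::field"
  assumes "finite F" "forest F" "\<forall>(i, j) \<in> F. w i j \<noteq> 0 \<and> w j i = inverse (w i j)"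
  shows "\<exists>d. (\<forall>v. d v \<noteq> 0) \<and> (\<forall>(i, j) \<in> F. d j = d i * w i j)"
  using assms
proof (induction "card F" arbitrary: F rule: less_induct)
  case (less F)
  show ?case
  proof (cases "F = {}")
    case True
    then show ?thesis by (intro exI[of _ "\<lambda>_. 1"]) auto
  next
    case False
    then obtain i j where ij: "(i, j) \<in> F" by auto
    define F' where "F' = F - {(i, j), (j, i)}"
    have "(j, i) \<in> F" using ij less.prems(2) unfolding forest_def by (auto dest: symD)
    then have F: "F = insert (i, j) (insert (j, i) F')" unfolding F'_def using ij by blast
    have "sym F'" using less.prems(2) unfolding F'_def forest_def sym_def by blast
    then have "forest F'" using forest_subset[OF less.prems(2)] unfolding F'_def by blast
    moreover have "card F' < card F" unfolding F'_def using ij less.prems(1)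
      by (intro psubset_card_mono) auto
    moreover have "finite F'" "\<forall>(u, v) \<in> F'. w u v \<noteq> 0 \<and> w v u = inverse (w u v)"
      using less.prems(1,3) unfolding F'_def by auto
    ultimately obtain d' where "\<forall>v. d' v \<noteq> 0" "\<forall>(u, v) \<in> F'. d' v = d' u * w u v"
      using less.hyps by blast
    moreover have "(i, j) \<notin> F'\<^sup>*" using less.prems(2) ij unfolding forest_def F'_def by blast
    moreover have "w i j \<noteq> 0" "w j i = inverse (w i j)" using less.prems(3) ij by auto
    ultimately show ?thesis
      unfolding F using potential_add_bridge[OF \<open>sym F'\<close>] by blast
  qed
qed

lemma mmult_assoc: "mmult n (mmult n A B) C = mmult n A (mmult n B C)"
proof -
  have "(\<Sum>l=1..n. (\<Sum>m=1..n. A i m * B m l) * C l j) = (\<Sum>m=1..n. A i m * (\<Sum>l=1..n. B m l * C l j))"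
    for i j
    unfolding sum_distrib_left sum_distrib_right by (subst sum.swap) (simp add: mult.assoc)
  then show ?thesis unfolding mmult_def by (auto intro!: ext sum.cong)
qed

lemma mmult_diagm_left:
  "mmult n (diagm n d) B = (\<lambda>i j. if i \<in> {1..n} \<and> j \<in> {1..n} then d i * B i j else 0)"
  unfolding mmult_def diagm_def by (auto intro!: ext simp: if_distrib[of "\<lambda>x. x * _"] cong: if_cong)

lemma mmult_diagm_right:
  "mmult n B (diagm n d) = (\<lambda>i j. if i \<in> {1..n} \<and> j \<in> {1..n} then B i j * d j else 0)"
  unfolding mmult_def diagm_def by (auto intro!: ext simp: if_distrib[of "\<lambda>x. _ * x"] cong: if_cong)

lemma mone_eq_diagm: "mone n = diagm n (\<lambda>_. 1)"
  unfolding mone_def diagm_def by simp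

lemma mmult_diagm_diagm: "mmult n (diagm n d) (diagm n e) = diagm n (\<lambda>i. d i * e i)"
  unfolding mmult_diagm_left by (auto simp: diagm_def intro!: ext)

abbreviation nowhere_zero :: "nat \<Rightarrow> (nat \<Rightarrow> 'a::field) \<Rightarrow> bool" where
  "nowhere_zero n d \<equiv> \<forall>i \<in> {1..n}. d i \<noteq> 0"

lemma diagm_inverse_eq_mone: "nowhere_zero n d \<Longrightarrow> diagm n (\<lambda>i. d i * inverse (d i)) = mone n"
  unfolding mone_def diagm_def by (auto intro!: ext)

lemma fmul_one [simp]: "fmul (\<lambda>i j. 1) a = a" "fmul a (\<lambda>i j. 1) = a"
  unfolding fmul_def by auto

lemma fmul_assoc: "fmul (fmul a b) c = fmul a (fmul b c)"
  unfolding fmul_def by (simp add: mult.assoc)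

lemma fmul_commute: "fmul a b = fmul b a"
  unfolding fmul_def by (simp add: mult.commute)

lemma act_fmul: "act \<rho> (fmul a b) A = act \<rho> a (act \<rho> b A)"
  unfolding act_def fmul_def by (auto intro!: ext)

lemma act_in_Mrho: "act \<rho> a A \<in> Mrho \<rho>"
  unfolding act_def Mrho_def by auto

lemma UT_simps [simp]:
  "carrier (UT n \<rho>) = RUnits n \<rho> \<times> Tgrp \<rho>"
  "(A, a) \<otimes>\<^bsub>UT n \<rho>\<^esub> (B, b) = (mmult n A (act \<rho> a B), fmul a b)"
  "\<one>\<^bsub>UT n \<rho>\<^esub> = (mone n, \<lambda>i j. 1)"
  unfolding UT_def by auto

locale incidence_preorder =
  fixes n :: nat and \<rho> :: "(nat \<times> nat) set"
  assumes preorder: "rho_preorder n \<rho>"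
begin

lemma rho_in_range: "(i, j) \<in> \<rho> \<Longrightarrow> i \<in> {1..n} \<and> j \<in> {1..n}"
  using preorder unfolding rho_preorder_def by auto

lemma rho_refl: "i \<in> {1..n} \<Longrightarrow> (i, i) \<in> \<rho>"
  using preorder unfolding rho_preorder_def refl_on_def by auto

lemma rho_trans: "(i, j) \<in> \<rho> \<Longrightarrow> (j, r) \<in> \<rho> \<Longrightarrow> (i, r) \<in> \<rho>"
  using preorder unfolding rho_preorder_def trans_def by blast

lemma Mrho_zero: "A \<in> Mrho \<rho> \<Longrightarrow> (i, j) \<notin> \<rho> \<Longrightarrow> A i j = 0"
  unfolding Mrho_def by auto

lemma Mrho_zero_outside_range: "A \<in> Mrho \<rho> \<Longrightarrow> \<not> (i \<in> {1..n} \<and> j \<in> {1..n}) \<Longrightarrow> A i j = 0"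
  using Mrho_zero rho_in_range by blast

lemma mmult_mone_left: "A \<in> Mrho \<rho> \<Longrightarrow> mmult n (mone n) A = A"
  unfolding mone_eq_diagm mmult_diagm_left by (intro ext) (auto dest: Mrho_zero_outside_range[of A])

lemma mmult_mone_right: "A \<in> Mrho \<rho> \<Longrightarrow> mmult n A (mone n) = A"
  unfolding mone_eq_diagm mmult_diagm_right by (intro ext) (auto dest: Mrho_zero_outside_range[of A])

lemma mmult_in_Mrho:
  assumes "A \<in> Mrho \<rho>" "B \<in> Mrho \<rho>"
  shows "mmult n A B \<in> Mrho \<rho>"
proof -
  have "A i l * B l j = 0" if "(i, j) \<notin> \<rho>" for i j l
    using that assms Mrho_zero rho_trans by (metis mult_zero_left mult_zero_right)
  then show ?thesis unfolding Mrho_def mmult_def by (auto intro!: sum.neutral)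
qed

lemma diagm_in_Mrho: "diagm n d \<in> Mrho \<rho>"
  unfolding Mrho_def diagm_def using rho_refl by auto

lemma Tgrp_diag:
  assumes "a \<in> Tgrp \<rho>" "i \<in> {1..n}"
  shows "a i i = 1"
proof -
  have "a i i * a i i = a i i" "a i i \<noteq> 0" using assms rho_refl unfolding Tgrp_def by auto
  then show ?thesis by simp
qed

lemma Tgrp_nonzero: "a \<in> Tgrp \<rho> \<Longrightarrow> (i, j) \<in> \<rho> \<Longrightarrow> a i j \<noteq> 0"
  unfolding Tgrp_def by auto

lemma Tgrp_outside: "a \<in> Tgrp \<rho> \<Longrightarrow> (i, j) \<notin> \<rho> \<Longrightarrow> a i j = 1"
  unfolding Tgrp_def by auto

lemma Tgrp_mult: "a \<in> Tgrp \<rho> \<Longrightarrow> (i, j) \<in> \<rho> \<Longrightarrow> (j, r) \<in> \<rho> \<Longrightarrow> a i j * a j r = a i r"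
  unfolding Tgrp_def by auto

lemma one_in_Tgrp: "(\<lambda>i j. 1) \<in> Tgrp \<rho>"
  unfolding Tgrp_def by auto

lemma fmul_in_Tgrp: "a \<in> Tgrp \<rho> \<Longrightarrow> b \<in> Tgrp \<rho> \<Longrightarrow> fmul a b \<in> Tgrp \<rho>"
  unfolding Tgrp_def fmul_def by (auto simp: algebra_simps)

lemma inverse_in_Tgrp: "a \<in> Tgrp \<rho> \<Longrightarrow> (\<lambda>i j. inverse (a i j)) \<in> Tgrp \<rho>"
  unfolding Tgrp_def by (auto simp flip: inverse_mult_distrib)

lemma act_one: "A \<in> Mrho \<rho> \<Longrightarrow> act \<rho> (\<lambda>i j. 1) A = A"
  unfolding act_def using Mrho_zero by (auto intro!: ext)

lemma act_diagm: "a \<in> Tgrp \<rho> \<Longrightarrow> act \<rho> a (diagm n d) = diagm n d"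
  unfolding act_def diagm_def by (auto intro!: ext simp: Tgrp_diag rho_refl)

lemma act_mone: "a \<in> Tgrp \<rho> \<Longrightarrow> act \<rho> a (mone n) = mone n"
  unfolding mone_eq_diagm by (rule act_diagm)

lemma act_mmult:
  assumes a: "a \<in> Tgrp \<rho>" and A: "A \<in> Mrho \<rho>" and B: "B \<in> Mrho \<rho>"
  shows "act \<rho> a (mmult n A B) = mmult n (act \<rho> a A) (act \<rho> a B)"
proof (intro ext)
  fix i j
  show "act \<rho> a (mmult n A B) i j = mmult n (act \<rho> a A) (act \<rho> a B) i j"
  proof (cases "(i, j) \<in> \<rho>")
    case True
    have "a i j * (A i l * B l j) = act \<rho> a A i l * act \<rho> a B l j" for l
      using Tgrp_mult[OF a, of i l j] Mrho_zero[OF A, of i l] Mrho_zero[OF B, of l j]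
      unfolding act_def by (auto simp: algebra_simps)
    then show ?thesis using True rho_in_range[OF True] unfolding act_def mmult_def
      by (simp add: sum_distrib_left)
  next
    case False
    then show ?thesis
      using Mrho_zero[OF mmult_in_Mrho[OF act_in_Mrho act_in_Mrho]] unfolding act_def by simp
  qed
qed

lemma RUnitsI:
  assumes "A \<in> Mrho \<rho>" "B \<in> Mrho \<rho>" "mmult n A B = mone n" "mmult n B A = mone n"
  shows "A \<in> RUnits n \<rho>" "minv n \<rho> A = B"
proof -
  show "A \<in> RUnits n \<rho>" using assms unfolding RUnits_def by auto
  let ?C = "minv n \<rho> A"
  have C: "?C \<in> Mrho \<rho> \<and> mmult n A ?C = mone n \<and> mmult n ?C A = mone n"
    unfolding minv_def by (rule someI[of _ B]) (use assms in auto)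
  have "?C = mmult n ?C (mmult n A B)" using assms C mmult_mone_right by metis
  also have "\<dots> = mmult n (mmult n ?C A) B" by (simp add: mmult_assoc)
  also have "\<dots> = B" using C assms mmult_mone_left by simp
  finally show "?C = B" .
qed

lemma RUnitsD:
  assumes "A \<in> RUnits n \<rho>"
  shows "A \<in> Mrho \<rho>" "minv n \<rho> A \<in> Mrho \<rho>"
    "mmult n A (minv n \<rho> A) = mone n" "mmult n (minv n \<rho> A) A = mone n"
proof -
  obtain B where "A \<in> Mrho \<rho>" "B \<in> Mrho \<rho>" "mmult n A B = mone n" "mmult n B A = mone n"
    using assms unfolding RUnits_def by auto
  then show "A \<in> Mrho \<rho>" "minv n \<rho> A \<in> Mrho \<rho>"
    "mmult n A (minv n \<rho> A) = mone n" "mmult n (minv n \<rho> A) A = mone n"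
    using RUnitsI(2) by auto
qed

lemma minv_in_RUnits: "A \<in> RUnits n \<rho> \<Longrightarrow> minv n \<rho> A \<in> RUnits n \<rho>"
  using RUnitsD RUnitsI by metis

lemma mone_in_RUnits: "mone n \<in> RUnits n \<rho>"
  using RUnitsI(1)[OF diagm_in_Mrho diagm_in_Mrho] mmult_mone_left[OF diagm_in_Mrho]
  unfolding mone_eq_diagm by blast

lemma mmult_in_RUnits:
  assumes "A \<in> RUnits n \<rho>" "B \<in> RUnits n \<rho>"
  shows "mmult n A B \<in> RUnits n \<rho>"
    "minv n \<rho> (mmult n A B) = mmult n (minv n \<rho> B) (minv n \<rho> A)"
proof -
  note A = RUnitsD[OF assms(1)] and B = RUnitsD[OF assms(2)]
  let ?C = "mmult n (minv n \<rho> B) (minv n \<rho> A)"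
  have "mmult n (mmult n A B) ?C = mone n"
    by (simp add: mmult_assoc flip: mmult_assoc[of n B] add: A B mmult_mone_left)
  moreover have "mmult n ?C (mmult n A B) = mone n"
    by (simp add: mmult_assoc flip: mmult_assoc[of n "minv n \<rho> A"] add: A B mmult_mone_left)
  ultimately show "mmult n A B \<in> RUnits n \<rho>" "minv n \<rho> (mmult n A B) = ?C"
    using RUnitsI[OF mmult_in_Mrho mmult_in_Mrho] A B by blast+
qed

lemma act_in_RUnits:
  assumes "a \<in> Tgrp \<rho>" "A \<in> RUnits n \<rho>"
  shows "act \<rho> a A \<in> RUnits n \<rho>"
proof -
  note A = RUnitsD[OF assms(2)]
  have "mmult n (act \<rho> a A) (act \<rho> a (minv n \<rho> A)) = mone n"
    "mmult n (act \<rho> a (minv n \<rho> A)) (act \<rho> a A) = mone n"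
    using act_mmult[OF assms(1)] A act_mone[OF assms(1)] by metis+
  then show ?thesis using RUnitsI(1)[OF act_in_Mrho act_in_Mrho] by blast
qed

lemma diagm_in_RUnits:
  assumes "nowhere_zero n d"
  shows "diagm n d \<in> RUnits n \<rho>" "minv n \<rho> (diagm n d) = diagm n (\<lambda>i. inverse (d i))"
proof -
  have "diagm n (\<lambda>i. inverse (d i) * d i) = mone n"
    using diagm_inverse_eq_mone[OF assms] by (simp add: mult.commute)
  then show "diagm n d \<in> RUnits n \<rho>" "minv n \<rho> (diagm n d) = diagm n (\<lambda>i. inverse (d i))"
    using RUnitsI[OF diagm_in_Mrho diagm_in_Mrho] mmult_diagm_diagm diagm_inverse_eq_mone[OF assms]
    by metis+
qed

lemma group_UT: "group (UT n \<rho> :: ('a::field mat \<times> 'a mat) monoid)"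
proof (rule groupI)
  fix x y :: "'a mat \<times> 'a mat"
  assume "x \<in> carrier (UT n \<rho>)" "y \<in> carrier (UT n \<rho>)"
  then show "x \<otimes>\<^bsub>UT n \<rho>\<^esub> y \<in> carrier (UT n \<rho>)"
    by (auto simp: mmult_in_RUnits act_in_RUnits fmul_in_Tgrp)
next
  show "\<one>\<^bsub>UT n \<rho>\<^esub> \<in> carrier (UT n \<rho>)" using mone_in_RUnits one_in_Tgrp by simp
next
  fix x y z :: "'a mat \<times> 'a mat"
  assume "x \<in> carrier (UT n \<rho>)" "y \<in> carrier (UT n \<rho>)" "z \<in> carrier (UT n \<rho>)"
  then show "x \<otimes>\<^bsub>UT n \<rho>\<^esub> y \<otimes>\<^bsub>UT n \<rho>\<^esub> z = x \<otimes>\<^bsub>UT n \<rho>\<^esub> (y \<otimes>\<^bsub>UT n \<rho>\<^esub> z)"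
    by (auto simp: mmult_assoc act_mmult RUnitsD act_in_Mrho act_fmul fmul_assoc)
next
  fix x :: "'a mat \<times> 'a mat"
  assume "x \<in> carrier (UT n \<rho>)"
  then show "\<one>\<^bsub>UT n \<rho>\<^esub> \<otimes>\<^bsub>UT n \<rho>\<^esub> x = x"
    by (auto simp: act_one RUnitsD mmult_mone_left)
next
  fix x :: "'a mat \<times> 'a mat"
  assume "x \<in> carrier (UT n \<rho>)"
  then obtain A a where x: "x = (A, a)" and A: "A \<in> RUnits n \<rho>" and a: "a \<in> Tgrp \<rho>" by auto
  define b where "b = (\<lambda>i j. inverse (a i j))"
  have b: "b \<in> Tgrp \<rho>" unfolding b_def using inverse_in_Tgrp[OF a] .
  have "fmul b a = (\<lambda>i j. 1)"
    unfolding fmul_def b_def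
    by (intro ext) (metis Tgrp_nonzero[OF a] Tgrp_outside[OF a] left_inverse inverse_1 mult_1)
  moreover have "mmult n (act \<rho> b (minv n \<rho> A)) (act \<rho> b A) = mone n"
    using act_mmult[OF b] RUnitsD[OF A] act_mone[OF b] by metis
  moreover have "(act \<rho> b (minv n \<rho> A), b) \<in> carrier (UT n \<rho>)"
    using act_in_RUnits[OF b minv_in_RUnits[OF A]] b by simp
  ultimately show "\<exists>y \<in> carrier (UT n \<rho>). y \<otimes>\<^bsub>UT n \<rho>\<^esub> x = \<one>\<^bsub>UT n \<rho>\<^esub>"
    using x by auto
qed

end

section \<open>The normal subgroup \<open>D\<^sub>0\<close>\<close>

definition coboundary :: "(nat \<times> nat) set \<Rightarrow> (nat \<Rightarrow> 'a::field) \<Rightarrow> 'a mat" where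
  "coboundary \<rho> d = (\<lambda>i j. if (i, j) \<in> \<rho> then inverse (d i) * d j else 1)"

definition diag_cobound :: "nat \<Rightarrow> (nat \<times> nat) set \<Rightarrow> (nat \<Rightarrow> 'a::field) \<Rightarrow> 'a mat \<times> 'a mat" where
  "diag_cobound n \<rho> d = (diagm n d, coboundary \<rho> d)"

lemma D0_eq: "D0 n \<rho> = {diag_cobound n \<rho> d | d. nowhere_zero n d}"
  unfolding D0_def diag_cobound_def coboundary_def by simp

lemma fmul_coboundary: "fmul (coboundary \<rho> d) (coboundary \<rho> e) = coboundary \<rho> (\<lambda>i. d i * e i)"
  unfolding fmul_def coboundary_def by (auto intro!: ext simp: algebra_simps)

context incidence_preorder
begin

lemma coboundary_in_Tgrp: "nowhere_zero n d \<Longrightarrow> coboundary \<rho> d \<in> Tgrp \<rho>"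
  unfolding Tgrp_def coboundary_def using rho_in_range rho_trans by auto

lemma coboundary_entry_eq_one_iff:
  "(i, j) \<in> \<rho> \<Longrightarrow> nowhere_zero n d \<Longrightarrow> coboundary \<rho> d i j = 1 \<longleftrightarrow> d i = d j"
  using rho_in_range[of i j] by (auto simp: coboundary_def field_simps)

lemma coboundary_eq_one_iff:
  assumes "nowhere_zero n d"
  shows "coboundary \<rho> d = (\<lambda>i j. 1) \<longleftrightarrow> (\<forall>(i, j) \<in> \<rho>. d i = d j)"
proof
  assume "coboundary \<rho> d = (\<lambda>i j. 1)"
  then show "\<forall>(i, j) \<in> \<rho>. d i = d j" using coboundary_entry_eq_one_iff[OF _ assms] by auto
next
  assume const: "\<forall>(i, j) \<in> \<rho>. d i = d j"
  show "coboundary \<rho> d = (\<lambda>i j. 1)"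
  proof (intro ext)
    fix i j
    show "coboundary \<rho> d i j = 1"
      by (cases "(i, j) \<in> \<rho>") (use const coboundary_entry_eq_one_iff[OF _ assms] in
          \<open>auto simp: coboundary_def\<close>)
  qed
qed

lemma diag_cobound_in_UT:
  assumes "nowhere_zero n d"
  shows "diag_cobound n \<rho> d \<in> carrier (UT n \<rho>)"
  using coboundary_in_Tgrp[OF assms] diagm_in_RUnits(1)[OF assms] by (simp add: diag_cobound_def)

lemma diag_cobound_cong: "\<forall>i \<in> {1..n}. d i = e i \<Longrightarrow> diag_cobound n \<rho> d = diag_cobound n \<rho> e"
  unfolding diag_cobound_def diagm_def coboundary_def using rho_in_range by (auto intro!: ext)

lemma diag_cobound_mult_left:
  assumes "nowhere_zero n d" "A \<in> Mrho \<rho>"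
  shows "diag_cobound n \<rho> d \<otimes>\<^bsub>UT n \<rho>\<^esub> (A, a) = (mmult n A (diagm n d), fmul a (coboundary \<rho> d))"
proof -
  have "mmult n (diagm n d) (act \<rho> (coboundary \<rho> d) A) = mmult n A (diagm n d)"
    unfolding mmult_diagm_left mmult_diagm_right act_def coboundary_def
    by (intro ext) (use assms Mrho_zero[OF assms(2)] in auto)
  then show ?thesis by (simp add: diag_cobound_def fmul_commute)
qed

lemma diag_cobound_mult_right:
  "a \<in> Tgrp \<rho> \<Longrightarrow> (A, a) \<otimes>\<^bsub>UT n \<rho>\<^esub> diag_cobound n \<rho> d = (mmult n A (diagm n d), fmul a (coboundary \<rho> d))"
  by (simp add: diag_cobound_def act_diagm)

lemma diag_cobound_central:
  assumes "nowhere_zero n d" "x \<in> carrier (UT n \<rho>)"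
  shows "diag_cobound n \<rho> d \<otimes>\<^bsub>UT n \<rho>\<^esub> x = x \<otimes>\<^bsub>UT n \<rho>\<^esub> diag_cobound n \<rho> d"
proof -
  obtain A a where x: "x = (A, a)" and A: "A \<in> RUnits n \<rho>" and a: "a \<in> Tgrp \<rho>"
    using assms(2) by auto
  show ?thesis
    unfolding x diag_cobound_mult_left[OF assms(1) RUnitsD(1)[OF A]] diag_cobound_mult_right[OF a] ..
qed

lemma diag_cobound_mult:
  assumes "nowhere_zero n e"
  shows "diag_cobound n \<rho> e \<otimes>\<^bsub>UT n \<rho>\<^esub> diag_cobound n \<rho> d = diag_cobound n \<rho> (\<lambda>i. d i * e i)"
  using diag_cobound_mult_left[OF assms diagm_in_Mrho, of d "coboundary \<rho> d"]
  by (simp add: diag_cobound_def mmult_diagm_diagm fmul_coboundary)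

lemma diag_cobound_one: "diag_cobound n \<rho> (\<lambda>_. 1) = \<one>\<^bsub>UT n \<rho>\<^esub>"
  by (simp add: diag_cobound_def coboundary_def mone_eq_diagm fun_eq_iff)

lemma D0_subgroup: "subgroup (D0 n \<rho>) (UT n \<rho> :: ('a::field mat \<times> 'a mat) monoid)"
proof (rule group.subgroupI[OF group_UT])
  show "D0 n \<rho> \<subseteq> carrier (UT n \<rho> :: ('a mat \<times> 'a mat) monoid)"
    unfolding D0_eq using diag_cobound_in_UT by blast
  have "diag_cobound n \<rho> (\<lambda>_. 1 :: 'a) \<in> D0 n \<rho>" unfolding D0_eq by auto
  then show "D0 n \<rho> \<noteq> ({} :: ('a mat \<times> 'a mat) set)" by blast
next
  fix x :: "'a mat \<times> 'a mat"
  assume "x \<in> D0 n \<rho>"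
  then obtain d where x: "x = diag_cobound n \<rho> d" and d: "nowhere_zero n d" unfolding D0_eq by blast
  have inv_d: "nowhere_zero n (\<lambda>i. inverse (d i))" using d by simp
  have "diag_cobound n \<rho> (\<lambda>i. inverse (d i)) \<otimes>\<^bsub>UT n \<rho>\<^esub> x = diag_cobound n \<rho> (\<lambda>i. d i * inverse (d i))"
    unfolding x by (rule diag_cobound_mult[OF inv_d])
  also have "\<dots> = \<one>\<^bsub>UT n \<rho>\<^esub>"
    using d diag_cobound_cong[of "\<lambda>i. d i * inverse (d i)" "\<lambda>_. 1"] diag_cobound_one by simp
  finally have "diag_cobound n \<rho> (\<lambda>i. inverse (d i)) \<otimes>\<^bsub>UT n \<rho>\<^esub> x = \<one>\<^bsub>UT n \<rho>\<^esub>" .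
  moreover have "x \<in> carrier (UT n \<rho>)" unfolding x by (rule diag_cobound_in_UT[OF d])
  ultimately have "inv\<^bsub>UT n \<rho>\<^esub> x = diag_cobound n \<rho> (\<lambda>i. inverse (d i))"
    using group.inv_equality[OF group_UT] diag_cobound_in_UT[OF inv_d] by blast
  then show "inv\<^bsub>UT n \<rho>\<^esub> x \<in> D0 n \<rho>" using inv_d unfolding D0_eq by blast
next
  fix x y :: "'a mat \<times> 'a mat"
  assume "x \<in> D0 n \<rho>" "y \<in> D0 n \<rho>"
  then obtain d e where xy: "x = diag_cobound n \<rho> e" "y = diag_cobound n \<rho> d"
    and e: "nowhere_zero n e" and d: "nowhere_zero n d" unfolding D0_eq by blast
  have "nowhere_zero n (\<lambda>i. d i * e i)" using d e by simp
  then show "x \<otimes>\<^bsub>UT n \<rho>\<^esub> y \<in> D0 n \<rho>"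
    unfolding D0_eq xy diag_cobound_mult[OF e] by blast
qed

lemma D0_normal: "D0 n \<rho> \<lhd> (UT n \<rho> :: ('a::field mat \<times> 'a mat) monoid)"
proof -
  interpret UT: group "UT n \<rho> :: ('a mat \<times> 'a mat) monoid" by (rule group_UT)
  show ?thesis unfolding UT.normal_inv_iff
  proof (intro conjI ballI D0_subgroup)
    fix x h :: "'a mat \<times> 'a mat"
    assume x: "x \<in> carrier (UT n \<rho>)" and h: "h \<in> D0 n \<rho>"
    then obtain d where d: "h = diag_cobound n \<rho> d" "nowhere_zero n d" unfolding D0_eq by blast
    then have "h \<in> carrier (UT n \<rho>)" using diag_cobound_in_UT by blast
    then have "x \<otimes>\<^bsub>UT n \<rho>\<^esub> h \<otimes>\<^bsub>UT n \<rho>\<^esub> inv\<^bsub>UT n \<rho>\<^esub> x = h"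
      using diag_cobound_central[OF d(2) x] d(1) x by (metis UT.inv_closed UT.m_assoc UT.r_inv UT.r_one)
    then show "x \<otimes>\<^bsub>UT n \<rho>\<^esub> h \<otimes>\<^bsub>UT n \<rho>\<^esub> inv\<^bsub>UT n \<rho>\<^esub> x \<in> D0 n \<rho>" using h by simp
  qed
qed

lemma rcos_D0_eq_iff:
  assumes "(A, a) \<in> carrier (UT n \<rho>)" "(B, b) \<in> carrier (UT n \<rho>)"
  shows "D0 n \<rho> #>\<^bsub>UT n \<rho>\<^esub> (A, a) = D0 n \<rho> #>\<^bsub>UT n \<rho>\<^esub> (B, b) \<longleftrightarrow>
    (\<exists>d. nowhere_zero n d \<and> A = mmult n B (diagm n d) \<and> a = fmul b (coboundary \<rho> d))"
proof -
  interpret UT: group "UT n \<rho> :: ('a mat \<times> 'a mat) monoid" by (rule group_UT)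
  have "D0 n \<rho> #>\<^bsub>UT n \<rho>\<^esub> (A, a) = D0 n \<rho> #>\<^bsub>UT n \<rho>\<^esub> (B, b) \<longleftrightarrow>
      (A, a) \<in> D0 n \<rho> #>\<^bsub>UT n \<rho>\<^esub> (B, b)"
    using UT.repr_independence[OF _ assms(2) D0_subgroup]
      UT.repr_independenceD[OF D0_subgroup assms(1)] by metis
  also have "\<dots> \<longleftrightarrow> (\<exists>d. nowhere_zero n d \<and> (A, a) = diag_cobound n \<rho> d \<otimes>\<^bsub>UT n \<rho>\<^esub> (B, b))"
    unfolding r_coset_def D0_eq by blast
  also have "\<dots> \<longleftrightarrow> (\<exists>d. nowhere_zero n d \<and> A = mmult n B (diagm n d) \<and> a = fmul b (coboundary \<rho> d))"
    using assms(2) by (auto simp: diag_cobound_mult_left RUnitsD(1))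
  finally show ?thesis .
qed

end

section \<open>Inner automorphisms\<close>

definition unit_mat :: "nat \<Rightarrow> nat \<Rightarrow> 'a::field mat" where
  "unit_mat i j = (\<lambda>k l. if k = i \<and> l = j then 1 else 0)"

lemma mmult_unit_mat_right:
  "i \<in> {1..n} \<Longrightarrow>
    mmult n Z (unit_mat i j) k l = (if k \<in> {1..n} \<and> l \<in> {1..n} \<and> l = j then Z k i else 0)"
  unfolding mmult_def unit_mat_def by (auto simp: if_distrib[of "\<lambda>x. _ * x"] cong: if_cong)

lemma mmult_unit_mat_left:
  "j \<in> {1..n} \<Longrightarrow>
    mmult n (unit_mat i j) Z k l = (if k \<in> {1..n} \<and> l \<in> {1..n} \<and> k = i then Z j l else 0)"
  unfolding mmult_def unit_mat_def by (auto simp: if_distrib[of "\<lambda>x. x * _"] cong: if_cong)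

context incidence_preorder
begin

lemma unit_mat_in_Mrho: "(i, j) \<in> \<rho> \<Longrightarrow> unit_mat i j \<in> Mrho \<rho>"
  unfolding unit_mat_def Mrho_def by auto

text \<open>Testing against the matrix units: \<open>Z E\<^sub>l\<^sub>l = E\<^sub>l\<^sub>l Z\<close> kills the off-diagonal entries,
  and \<open>Z E\<^sub>i\<^sub>j = E\<^sub>i\<^sub>j Z\<close> for \<open>(i, j) \<in> \<rho>\<close> gives \<open>Z\<^sub>i\<^sub>i = Z\<^sub>j\<^sub>j\<close>.\<close>
lemma central_in_Mrho_diagm:
  assumes Z: "Z \<in> Mrho \<rho>" and central: "\<And>X. X \<in> Mrho \<rho> \<Longrightarrow> mmult n Z X = mmult n X Z"
  shows "Z = diagm n (\<lambda>i. Z i i)" "\<And>i j. (i, j) \<in> \<rho> \<Longrightarrow> Z i i = Z j j"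
proof -
  have off_diag: "Z k l = 0" if "k \<noteq> l" for k l
  proof (cases "k \<in> {1..n} \<and> l \<in> {1..n}")
    case True
    have "mmult n Z (unit_mat l l) k l = mmult n (unit_mat l l) Z k l"
      using central[OF unit_mat_in_Mrho[OF rho_refl]] True by simp
    then show ?thesis using True that mmult_unit_mat_right[of l n Z l k l] mmult_unit_mat_left[of l n l Z k l]
      by simp
  next
    case False
    then show ?thesis using Mrho_zero_outside_range[OF Z] by blast
  qed
  show "Z = diagm n (\<lambda>i. Z i i)" unfolding diagm_def
    by (intro ext) (use off_diag Mrho_zero_outside_range[OF Z] in auto)
  fix i j
  assume ij: "(i, j) \<in> \<rho>"
  have "mmult n Z (unit_mat i j) i j = mmult n (unit_mat i j) Z i j"
    using central[OF unit_mat_in_Mrho[OF ij]] by simp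
  then show "Z i i = Z j j"
    using rho_in_range[OF ij] mmult_unit_mat_right[of i n Z j i j] mmult_unit_mat_left[of j n i Z i j]
    by simp
qed

lemma Cinn_in_Mrho: "A \<in> RUnits n \<rho> \<Longrightarrow> X \<in> Mrho \<rho> \<Longrightarrow> Cinn n \<rho> A X \<in> Mrho \<rho>"
  unfolding Cinn_def by (simp add: RUnitsD mmult_in_Mrho)

lemma compose_Cinn:
  assumes "A \<in> RUnits n \<rho>" "B \<in> RUnits n \<rho>"
  shows "compose (Mrho \<rho>) (Cinn n \<rho> A) (Cinn n \<rho> B) = Cinn n \<rho> (mmult n A B)"
proof (rule ext)
  fix X
  show "compose (Mrho \<rho>) (Cinn n \<rho> A) (Cinn n \<rho> B) X = Cinn n \<rho> (mmult n A B) X"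
    using Cinn_in_Mrho[OF assms(2)] mmult_in_RUnits[OF assms] unfolding compose_def
    by (auto simp: mmult_assoc Cinn_def)
qed

lemma Cinn_eq_imp_commute:
  assumes A: "A \<in> RUnits n \<rho>" and B: "B \<in> RUnits n \<rho>" and eq: "Cinn n \<rho> A = Cinn n \<rho> B"
    and X: "X \<in> Mrho \<rho>"
  shows "mmult n (mmult n (minv n \<rho> B) A) X = mmult n X (mmult n (minv n \<rho> B) A)"
proof -
  note uA = RUnitsD[OF A] and uB = RUnitsD[OF B]
  let ?Ai = "minv n \<rho> A" and ?Bi = "minv n \<rho> B"
  have AX: "mmult n A X \<in> Mrho \<rho>" using mmult_in_Mrho uA X by blast
  have e: "mmult n (mmult n A X) ?Ai = mmult n (mmult n B X) ?Bi"
    using fun_cong[OF eq, of X] X unfolding Cinn_def by simp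
  have "mmult n (mmult n ?Bi A) X = mmult n ?Bi (mmult n (mmult n (mmult n A X) ?Ai) A)"
    by (simp add: mmult_assoc uA mmult_mone_right AX X flip: mmult_assoc[of n X])
  also have "\<dots> = mmult n ?Bi (mmult n (mmult n (mmult n B X) ?Bi) A)" by (simp only: e)
  also have "\<dots> = mmult n X (mmult n ?Bi A)"
    using mmult_in_Mrho[OF X mmult_in_Mrho[OF uB(2) uA(1)]]
    by (simp add: mmult_assoc X mmult_mone_left uB flip: mmult_assoc[of n ?Bi B])
  finally show ?thesis .
qed

lemma diagm_in_RUnits_imp_nonzero:
  assumes "diagm n d \<in> RUnits n \<rho>"
  shows "nowhere_zero n d"
proof
  fix i
  assume i: "i \<in> {1..n}"
  have "mmult n (diagm n d) (minv n \<rho> (diagm n d)) i i = mone n i i"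
    using RUnitsD[OF assms] by simp
  then show "d i \<noteq> 0" using i unfolding mmult_diagm_left mone_def by auto
qed

lemma Cinn_eq_imp_rcos_eq:
  assumes A: "A \<in> RUnits n \<rho>" and B: "B \<in> RUnits n \<rho>" and a: "a \<in> Tgrp \<rho>"
    and eq: "Cinn n \<rho> A = Cinn n \<rho> B"
  shows "D0 n \<rho> #>\<^bsub>UT n \<rho>\<^esub> (A, a) = D0 n \<rho> #>\<^bsub>UT n \<rho>\<^esub> (B, a)"
proof -
  define Z where "Z = mmult n (minv n \<rho> B) A"
  define z where "z i = Z i i" for i
  have Z: "Z \<in> RUnits n \<rho>" unfolding Z_def using mmult_in_RUnits minv_in_RUnits A B by blast
  have Zd: "Z = diagm n z" and const: "\<forall>(i, j) \<in> \<rho>. z i = z j"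
    using central_in_Mrho_diagm[OF RUnitsD(1)[OF Z]] Cinn_eq_imp_commute[OF A B eq]
    unfolding Z_def z_def by auto
  have nz: "nowhere_zero n z" using Z Zd diagm_in_RUnits_imp_nonzero by blast
  have "A = mmult n B (diagm n z)" unfolding Zd[symmetric] Z_def
    by (simp add: RUnitsD[OF B] RUnitsD(1)[OF A] mmult_mone_left flip: mmult_assoc)
  moreover have "a = fmul a (coboundary \<rho> z)" using coboundary_eq_one_iff[OF nz] const by simp
  moreover have "(A, a) \<in> carrier (UT n \<rho>)" "(B, a) \<in> carrier (UT n \<rho>)" using A B a by auto
  ultimately show ?thesis using rcos_D0_eq_iff nz by blast
qed

lemma Cinn_diagm_const:
  assumes nz: "nowhere_zero n d" and const: "\<forall>(i, j) \<in> \<rho>. d i = d j" and X: "X \<in> Mrho \<rho>"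
  shows "Cinn n \<rho> (diagm n d) X = X"
proof -
  have commute: "mmult n (diagm n d) X = mmult n X (diagm n d)"
    unfolding mmult_diagm_left mmult_diagm_right
    by (intro ext) (use const Mrho_zero[OF X] in \<open>auto simp: mult.commute\<close>)
  have "Cinn n \<rho> (diagm n d) X = mmult n (mmult n X (diagm n d)) (diagm n (\<lambda>i. inverse (d i)))"
    unfolding Cinn_def using X diagm_in_RUnits(2)[OF nz] by (simp add: commute)
  also have "\<dots> = X"
    by (simp add: mmult_assoc mmult_diagm_diagm diagm_inverse_eq_mone[OF nz] mmult_mone_right X)
  finally show ?thesis .
qed

lemma Cinn_mmult_diagm_const:
  assumes B: "B \<in> RUnits n \<rho>" and nz: "nowhere_zero n d" and const: "\<forall>(i, j) \<in> \<rho>. d i = d j"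
  shows "Cinn n \<rho> (mmult n B (diagm n d)) = Cinn n \<rho> B"
proof (rule ext)
  fix X
  show "Cinn n \<rho> (mmult n B (diagm n d)) X = Cinn n \<rho> B X"
  proof (cases "X \<in> Mrho \<rho>")
    case True
    have "Cinn n \<rho> (mmult n B (diagm n d)) X = compose (Mrho \<rho>) (Cinn n \<rho> B) (Cinn n \<rho> (diagm n d)) X"
      by (simp add: compose_Cinn[OF B diagm_in_RUnits(1)[OF nz]])
    also have "\<dots> = Cinn n \<rho> B X" by (simp add: compose_eq True Cinn_diagm_const[OF nz const True])
    finally show ?thesis .
  next
    case False
    then show ?thesis by (simp add: Cinn_def)
  qed
qed

end

section \<open>Positions normalized in \<open>\<G>\<close>\<close>

definition pinned :: "nat \<Rightarrow> (nat \<times> nat) set \<Rightarrow> (nat \<times> nat) set \<Rightarrow> nat \<Rightarrow> nat \<Rightarrow> bool" where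
  "pinned n \<rho> F i j \<longleftrightarrow> (i, j) \<in> \<rho> \<and> ((i, j) \<in> F \<or> isolated n \<rho> i \<and> equivr \<rho> i j)"

lemma Ggrp_eq: "Ggrp n \<rho> F = {a \<in> Tgrp \<rho>. \<forall>i j. pinned n \<rho> F i j \<longrightarrow> a i j = 1}"
  unfolding Ggrp_def pinned_def by blast

lemma spanning_forest_imp_forest: "spanning_forest n \<rho> F \<Longrightarrow> forest F"
  unfolding spanning_forest_def forest_def by blast

lemma spanning_forest_finite: "spanning_forest n \<rho> F \<Longrightarrow> finite F"
  unfolding spanning_forest_def DeltaE_def DeltaV_def
  by (rule finite_subset[of _ "{1..n} \<times> {1..n}"]) auto

context incidence_preorder
begin

lemma equivr_trans: "equivr \<rho> i j \<Longrightarrow> equivr \<rho> j k \<Longrightarrow> equivr \<rho> i k"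
  unfolding equivr_def using rho_trans by blast

lemma isolated_equivr:
  assumes "isolated n \<rho> i" "equivr \<rho> i j"
  shows "isolated n \<rho> j"
  unfolding isolated_def
proof (intro ballI impI)
  fix k
  assume k: "k \<in> {1..n}" "(j, k) \<in> \<rho> \<or> (k, j) \<in> \<rho>"
  then have "(i, k) \<in> \<rho> \<or> (k, i) \<in> \<rho>" using assms(2) rho_trans unfolding equivr_def by blast
  then have "equivr \<rho> i k" using assms(1) k(1) unfolding isolated_def by blast
  then show "equivr \<rho> j k" using assms(2) equivr_trans unfolding equivr_def by blast
qed

text \<open>Two comparable but inequivalent indices are adjacent in \<open>\<Delta>\<close>; two equivalent non-isolated
  ones are joined through an index comparable with, but inequivalent to, both.\<close>
lemma rho_cases_isolated_or_DeltaE_path: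
  assumes ij: "(i, j) \<in> \<rho>"
  obtains "isolated n \<rho> i" "equivr \<rho> i j"
    | "i \<in> DeltaV n \<rho>" "j \<in> DeltaV n \<rho>" "(i, j) \<in> (DeltaE n \<rho>)\<^sup>*"
proof -
  have r: "i \<in> {1..n}" "j \<in> {1..n}" using rho_in_range[OF ij] by auto
  consider "isolated n \<rho> i" | k where "k \<in> {1..n}" "(i, k) \<in> \<rho> \<or> (k, i) \<in> \<rho>" "\<not> equivr \<rho> i k"
    unfolding isolated_def by blast
  then show ?thesis
  proof cases
    case 1
    then show ?thesis using that(1) r ij unfolding isolated_def by blast
  next
    case (2 k)
    have iV: "i \<in> DeltaV n \<rho>" using 2 r unfolding DeltaV_def isolated_def by auto
    show ?thesis
    proof (cases "equivr \<rho> i j")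
      case False
      then have "\<not> isolated n \<rho> j" using ij r unfolding isolated_def equivr_def by blast
      then have jV: "j \<in> DeltaV n \<rho>" using r unfolding DeltaV_def by auto
      have "(i, j) \<in> DeltaE n \<rho>" using iV jV False ij unfolding DeltaE_def by auto
      then show ?thesis using that(2) iV jV by blast
    next
      case True
      have kV: "k \<in> DeltaV n \<rho>" using 2 r unfolding DeltaV_def isolated_def equivr_def by blast
      have jk: "(j, k) \<in> \<rho> \<or> (k, j) \<in> \<rho>" using 2 True rho_trans unfolding equivr_def by blast
      have njk: "\<not> equivr \<rho> j k" using True 2 equivr_trans by blast
      have jV: "j \<in> DeltaV n \<rho>" using r jk njk 2 unfolding DeltaV_def isolated_def by blast
      have "(i, k) \<in> DeltaE n \<rho>" "(k, j) \<in> DeltaE n \<rho>"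
        using iV kV jV 2 jk njk unfolding DeltaE_def equivr_def by auto
      then have "(i, j) \<in> (DeltaE n \<rho>)\<^sup>*" by (meson converse_rtrancl_into_rtrancl r_into_rtrancl)
      then show ?thesis using that(2) iV jV by blast
    qed
  qed
qed

lemma rho_const_if_pinned_const:
  assumes SF: "spanning_forest n \<rho> F"
    and pinned: "\<And>i j. pinned n \<rho> F i j \<Longrightarrow> d i = d j"
    and ij: "(i, j) \<in> \<rho>"
  shows "d i = d j"
proof -
  have F: "F \<subseteq> DeltaE n \<rho>" "sym F"
    and spans: "\<And>u v. u \<in> DeltaV n \<rho> \<Longrightarrow> v \<in> DeltaV n \<rho> \<Longrightarrow> (u, v) \<in> (DeltaE n \<rho>)\<^sup>* \<Longrightarrow> (u, v) \<in> F\<^sup>*"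
    using SF unfolding spanning_forest_def by auto
  have edge: "d u = d v" if "(u, v) \<in> F" for u v
  proof -
    have "(u, v) \<in> \<rho> \<or> (v, u) \<in> \<rho>" using that F(1) unfolding DeltaE_def by auto
    moreover have "(v, u) \<in> F" using F(2) that by (rule symD)
    ultimately show ?thesis using pinned that unfolding pinned_def by metis
  qed
  have path: "d u = d v" if "(u, v) \<in> F\<^sup>*" for u v
    using that by (induction rule: rtrancl_induct) (auto dest: edge)
  show ?thesis
    by (rule rho_cases_isolated_or_DeltaE_path[OF ij]) (use pinned ij path spans in \<open>auto simp: pinned_def\<close>)
qed

text \<open>On a class of \<open>\<sim>\<close> take the entries of \<open>a\<close> in the row of the least index of the class.\<close>
lemma equivr_potential:
  fixes a :: "'a::field mat"
  assumes a: "a \<in> Tgrp \<rho>"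
  shows "\<exists>d. (\<forall>i. d i \<noteq> 0) \<and> (\<forall>i j. equivr \<rho> i j \<longrightarrow> d j = d i * a i j)"
proof -
  define r where "r j = (LEAST k. equivr \<rho> k j)" for j
  define d where "d j = a (r j) j" for j
  have "d i \<noteq> 0" for i
    unfolding d_def using Tgrp_nonzero[OF a] Tgrp_outside[OF a] by (cases "(r i, i) \<in> \<rho>") auto
  moreover have "d j = d i * a i j" if ij: "equivr \<rho> i j" for i j
  proof -
    have "equivr \<rho> k i \<longleftrightarrow> equivr \<rho> k j" for k using ij equivr_trans equivr_def by metis
    then have rr: "r i = r j" unfolding r_def by simp
    have "equivr \<rho> (r i) i" unfolding r_def by (rule LeastI[of _ i]) (use ij rho_trans in \<open>auto simp: equivr_def\<close>)
    then show ?thesis using rr Tgrp_mult[OF a] ij unfolding d_def equivr_def by auto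
  qed
  ultimately show ?thesis by blast
qed

lemma forest_edge_potential:
  fixes a :: "'a::field mat"
  assumes SF: "spanning_forest n \<rho> F" and a: "a \<in> Tgrp \<rho>"
  shows "\<exists>d. (\<forall>i. d i \<noteq> 0) \<and> (\<forall>(i, j) \<in> F. (i, j) \<in> \<rho> \<longrightarrow> d j = d i * a i j)"
proof -
  \<comment> \<open>Every edge of \<open>\<Delta>\<close> lies in exactly one of \<open>\<rho>\<close> and its converse.\<close>
  define w where "w i j = (if (i, j) \<in> \<rho> then a i j else inverse (a j i))" for i j
  have "w i j \<noteq> 0 \<and> w j i = inverse (w i j)" if "(i, j) \<in> F" for i j
  proof -
    have "(i, j) \<in> DeltaE n \<rho>" using that SF unfolding spanning_forest_def by auto
    then have "(i, j) \<in> \<rho> \<and> (j, i) \<notin> \<rho> \<or> (j, i) \<in> \<rho> \<and> (i, j) \<notin> \<rho>"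
      unfolding DeltaE_def equivr_def by auto
    then show ?thesis unfolding w_def using Tgrp_nonzero[OF a] by auto
  qed
  then obtain d where d: "\<forall>i. d i \<noteq> 0" "\<forall>(i, j) \<in> F. d j = d i * w i j"
    using forest_potential[OF spanning_forest_finite[OF SF] spanning_forest_imp_forest[OF SF]] by blast
  have "\<forall>(i, j) \<in> F. (i, j) \<in> \<rho> \<longrightarrow> d j = d i * a i j" using d(2) unfolding w_def by auto
  then show ?thesis using d(1) by blast
qed

lemma pinned_potential:
  fixes a :: "'a::field mat"
  assumes SF: "spanning_forest n \<rho> F" and a: "a \<in> Tgrp \<rho>"
  shows "\<exists>d. (\<forall>i. d i \<noteq> 0) \<and> (\<forall>i j. pinned n \<rho> F i j \<longrightarrow> d j = d i * a i j)"
proof -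
  obtain d1 where d1: "\<forall>i. d1 i \<noteq> 0" "\<forall>(i, j) \<in> F. (i, j) \<in> \<rho> \<longrightarrow> d1 j = d1 i * a i j"
    using forest_edge_potential[OF SF a] by blast
  obtain d2 where d2: "\<forall>i. d2 i \<noteq> 0" "\<forall>i j. equivr \<rho> i j \<longrightarrow> d2 j = d2 i * a i j"
    using equivr_potential[OF a] by blast
  \<comment> \<open>The edges of \<open>F\<close> join vertices of \<open>\<Delta>\<close>, the isolated classes lie outside \<open>\<Delta>\<close>.\<close>
  define d where "d j = (if j \<in> DeltaV n \<rho> then d1 j else d2 j)" for j
  have "d j = d i * a i j" if "pinned n \<rho> F i j" for i j
  proof -
    have F_in_V: "i \<in> DeltaV n \<rho> \<and> j \<in> DeltaV n \<rho>" if "(i, j) \<in> F"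
      using that SF unfolding spanning_forest_def DeltaE_def by auto
    have iso_out: "i \<notin> DeltaV n \<rho> \<and> j \<notin> DeltaV n \<rho>" if "isolated n \<rho> i" "equivr \<rho> i j"
      using that isolated_equivr unfolding DeltaV_def by blast
    show ?thesis using \<open>pinned n \<rho> F i j\<close> F_in_V iso_out d1 d2 unfolding pinned_def d_def by auto
  qed
  moreover have "\<forall>i. d i \<noteq> 0" using d1 d2 unfolding d_def by auto
  ultimately show ?thesis by blast
qed

end

section \<open>The isomorphism \<open>\<Psi>\<close>\<close>

definition Cinn_rep :: "nat \<Rightarrow> (nat \<times> nat) set \<Rightarrow> ('a::field mat \<Rightarrow> 'a mat) \<Rightarrow> 'a mat" where
  "Cinn_rep n \<rho> f = (SOME A. A \<in> RUnits n \<rho> \<and> f = Cinn n \<rho> A)"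

lemma Cinn_rep: "f \<in> Inn n \<rho> \<Longrightarrow> Cinn_rep n \<rho> f \<in> RUnits n \<rho> \<and> f = Cinn n \<rho> (Cinn_rep n \<rho> f)"
  unfolding Cinn_rep_def Inn_def using someI_ex[of "\<lambda>A. A \<in> RUnits n \<rho> \<and> f = Cinn n \<rho> A"] by blast

lemma Psi_eq: "Psi n \<rho> (f, a) = D0 n \<rho> #>\<^bsub>UT n \<rho>\<^esub> (Cinn_rep n \<rho> f, a)"
  unfolding Psi_def Cinn_rep_def by simp

lemma IG_simps [simp]:
  "carrier (IG n \<rho> F) = Inn n \<rho> \<times> Ggrp n \<rho> F"
  "(f, a) \<otimes>\<^bsub>IG n \<rho> F\<^esub> (g, b) =
    (compose (Mrho \<rho>) f (Cinn n \<rho> (act \<rho> a (Cinn_rep n \<rho> g))), fmul a b)"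
  unfolding IG_def actI_def Cinn_rep_def by auto

lemma Ggrp_imp_Tgrp: "a \<in> Ggrp n \<rho> F \<Longrightarrow> a \<in> Tgrp \<rho>"
  unfolding Ggrp_def by blast

context incidence_preorder
begin

lemma Psi_Cinn:
  assumes "C \<in> RUnits n \<rho>" "a \<in> Tgrp \<rho>"
  shows "Psi n \<rho> (Cinn n \<rho> C, a) = D0 n \<rho> #>\<^bsub>UT n \<rho>\<^esub> (C, a)"
proof -
  have "Cinn n \<rho> C \<in> Inn n \<rho>" using assms unfolding Inn_def by blast
  then show ?thesis unfolding Psi_eq using Cinn_rep Cinn_eq_imp_rcos_eq assms by metis
qed

lemma Psi_in_FactGroup:
  assumes "x \<in> carrier (IG n \<rho> F)"
  shows "Psi n \<rho> x \<in> carrier (UT n \<rho> Mod D0 n \<rho> :: ('a::field mat \<times> 'a mat) set monoid)"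
proof -
  obtain f a where x: "x = (f, a)" and f: "f \<in> Inn n \<rho>" and a: "a \<in> Ggrp n \<rho> F"
    using assms by auto
  have "(Cinn_rep n \<rho> f, a) \<in> carrier (UT n \<rho>)" using Cinn_rep[OF f] Ggrp_imp_Tgrp[OF a] by simp
  then show ?thesis unfolding x Psi_eq carrier_FactGroup by (rule imageI)
qed

lemma Psi_mult:
  assumes "x \<in> carrier (IG n \<rho> F)" "y \<in> carrier (IG n \<rho> F)"
  shows "Psi n \<rho> (x \<otimes>\<^bsub>IG n \<rho> F\<^esub> y) =
    Psi n \<rho> x \<otimes>\<^bsub>UT n \<rho> Mod D0 n \<rho> :: ('a::field mat \<times> 'a mat) set monoid\<^esub> Psi n \<rho> y"
proof -
  interpret N: normal "D0 n \<rho>" "UT n \<rho> :: ('a mat \<times> 'a mat) monoid" by (rule D0_normal)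
  obtain f a g b where x: "x = (f, a)" "f \<in> Inn n \<rho>" "a \<in> Ggrp n \<rho> F"
    and y: "y = (g, b)" "g \<in> Inn n \<rho>" "b \<in> Ggrp n \<rho> F" using assms by auto
  have a: "a \<in> Tgrp \<rho>" and b: "b \<in> Tgrp \<rho>" using x(3) y(3) Ggrp_imp_Tgrp by auto
  define A where "A = Cinn_rep n \<rho> f"
  define B where "B = Cinn_rep n \<rho> g"
  have A: "A \<in> RUnits n \<rho>" "f = Cinn n \<rho> A" using Cinn_rep[OF x(2)] unfolding A_def by auto
  have B: "B \<in> RUnits n \<rho>" using Cinn_rep[OF y(2)] unfolding B_def by auto
  have aB: "act \<rho> a B \<in> RUnits n \<rho>" using act_in_RUnits[OF a B] .
  have "x \<otimes>\<^bsub>IG n \<rho> F\<^esub> y = (Cinn n \<rho> (mmult n A (act \<rho> a B)), fmul a b)"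
    using x y compose_Cinn[OF A(1) aB] A(2) unfolding B_def by simp
  then have "Psi n \<rho> (x \<otimes>\<^bsub>IG n \<rho> F\<^esub> y) = D0 n \<rho> #>\<^bsub>UT n \<rho>\<^esub> ((A, a) \<otimes>\<^bsub>UT n \<rho>\<^esub> (B, b))"
    using Psi_Cinn[OF mmult_in_RUnits(1)[OF A(1) aB] fmul_in_Tgrp[OF a b]] by simp
  also have "\<dots> = (D0 n \<rho> #>\<^bsub>UT n \<rho>\<^esub> (A, a)) <#>\<^bsub>UT n \<rho>\<^esub> (D0 n \<rho> #>\<^bsub>UT n \<rho>\<^esub> (B, b))"
    using N.rcos_sum A B a b by simp
  finally show ?thesis using x y unfolding A_def B_def by (simp add: Psi_eq)
qed

lemma Psi_hom: "Psi n \<rho> \<in> hom (IG n \<rho> F) (UT n \<rho> Mod D0 n \<rho> :: ('a::field mat \<times> 'a mat) set monoid)"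
  by (intro homI Psi_in_FactGroup Psi_mult)

lemma Psi_inj_on:
  assumes SF: "spanning_forest n \<rho> F"
  shows "inj_on (Psi n \<rho> :: _ \<Rightarrow> ('a::field mat \<times> 'a mat) set) (carrier (IG n \<rho> F))"
proof
  fix x y :: "('a mat \<Rightarrow> 'a mat) \<times> 'a mat"
  assume "x \<in> carrier (IG n \<rho> F)" "y \<in> carrier (IG n \<rho> F)" and eq: "Psi n \<rho> x = Psi n \<rho> y"
  then obtain f a g b where x: "x = (f, a)" "f \<in> Inn n \<rho>" "a \<in> Ggrp n \<rho> F"
    and y: "y = (g, b)" "g \<in> Inn n \<rho>" "b \<in> Ggrp n \<rho> F" by auto
  define A where "A = Cinn_rep n \<rho> f"
  define B where "B = Cinn_rep n \<rho> g"
  have A: "A \<in> RUnits n \<rho>" "f = Cinn n \<rho> A" using Cinn_rep[OF x(2)] unfolding A_def by auto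
  have B: "B \<in> RUnits n \<rho>" "g = Cinn n \<rho> B" using Cinn_rep[OF y(2)] unfolding B_def by auto
  have a: "a \<in> Tgrp \<rho>" and b: "b \<in> Tgrp \<rho>" using x(3) y(3) Ggrp_imp_Tgrp by auto
  have "(A, a) \<in> carrier (UT n \<rho>)" "(B, b) \<in> carrier (UT n \<rho>)" using A(1) B(1) a b by auto
  moreover have "D0 n \<rho> #>\<^bsub>UT n \<rho>\<^esub> (A, a) = D0 n \<rho> #>\<^bsub>UT n \<rho>\<^esub> (B, b)"
    using eq x(1) y(1) unfolding A_def B_def by (simp add: Psi_eq)
  ultimately obtain d where d: "nowhere_zero n d" and AB: "A = mmult n B (diagm n d)"
    and ab: "a = fmul b (coboundary \<rho> d)"
    using rcos_D0_eq_iff by blast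
  have "d i = d j" if "pinned n \<rho> F i j" for i j
  proof -
    have "a i j = 1" "b i j = 1" using x(3) y(3) that unfolding Ggrp_eq by auto
    then have "coboundary \<rho> d i j = 1" using ab unfolding fmul_def by simp
    then show ?thesis using coboundary_entry_eq_one_iff[OF _ d] that unfolding pinned_def by blast
  qed
  then have const: "\<forall>(i, j) \<in> \<rho>. d i = d j" using rho_const_if_pinned_const[OF SF] by blast
  have "a = b" using ab coboundary_eq_one_iff[OF d] const by simp
  moreover have "f = g" using A(2) B(2) AB Cinn_mmult_diagm_const[OF B(1) d const] by simp
  ultimately show "x = y" using x(1) y(1) by simp
qed

lemma Psi_surj:
  assumes SF: "spanning_forest n \<rho> F"
  shows "Psi n \<rho> ` carrier (IG n \<rho> F) = carrier (UT n \<rho> Mod D0 n \<rho> :: ('a::field mat \<times> 'a mat) set monoid)"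
proof
  show "Psi n \<rho> ` carrier (IG n \<rho> F) \<subseteq> carrier (UT n \<rho> Mod D0 n \<rho> :: ('a mat \<times> 'a mat) set monoid)"
    using Psi_hom unfolding hom_def by blast
next
  show "carrier (UT n \<rho> Mod D0 n \<rho>) \<subseteq> (Psi n \<rho> ` carrier (IG n \<rho> F) :: ('a mat \<times> 'a mat) set set)"
  proof
    fix C :: "('a mat \<times> 'a mat) set"
    assume "C \<in> carrier (UT n \<rho> Mod D0 n \<rho>)"
    then obtain A a where C: "C = D0 n \<rho> #>\<^bsub>UT n \<rho>\<^esub> (A, a)" and A: "A \<in> RUnits n \<rho>" and a: "a \<in> Tgrp \<rho>"
      unfolding carrier_FactGroup by auto
    obtain d :: "nat \<Rightarrow> 'a" where d: "\<forall>i. d i \<noteq> 0" "\<forall>i j. pinned n \<rho> F i j \<longrightarrow> d j = d i * a i j"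
      using pinned_potential[OF SF a] by blast
    \<comment> \<open>Rescaling by the inverse potential normalizes \<open>a\<close> to 1 at the pinned positions.\<close>
    define e where "e i = inverse (d i)" for i
    have e: "nowhere_zero n e" using d(1) unfolding e_def by simp
    define B where "B = mmult n A (diagm n e)"
    define g where "g = fmul a (coboundary \<rho> e)"
    have B: "B \<in> RUnits n \<rho>" unfolding B_def using mmult_in_RUnits(1)[OF A diagm_in_RUnits(1)[OF e]] .
    have gT: "g \<in> Tgrp \<rho>" unfolding g_def using fmul_in_Tgrp[OF a coboundary_in_Tgrp[OF e]] .
    have "g i j = 1" if "pinned n \<rho> F i j" for i j
      using that d Tgrp_nonzero[OF a] unfolding g_def fmul_def coboundary_def e_def pinned_def
      by (auto simp: field_simps)
    then have "g \<in> Ggrp n \<rho> F" using gT unfolding Ggrp_eq by blast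
    then have "(Cinn n \<rho> B, g) \<in> carrier (IG n \<rho> F)" using B by (simp add: Inn_def)
    moreover have "Psi n \<rho> (Cinn n \<rho> B, g) = C"
      unfolding Psi_Cinn[OF B gT] C using rcos_D0_eq_iff[of B g A a] A B a gT e
      unfolding B_def g_def by auto
    ultimately show "C \<in> Psi n \<rho> ` carrier (IG n \<rho> F)" by (metis image_eqI)
  qed
qed

lemma Psi_iso:
  assumes "spanning_forest n \<rho> F"
  shows "Psi n \<rho> \<in> iso (IG n \<rho> F) (UT n \<rho> Mod D0 n \<rho> :: ('a::field mat \<times> 'a mat) set monoid)"
  unfolding iso_def bij_betw_def using Psi_hom Psi_inj_on[OF assms] Psi_surj[OF assms] by blast

end

theorem mainTheorem8:
  fixes n :: nat and \<rho> :: "(nat \<times> nat) set" and F :: "(nat \<times> nat) set"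
  assumes "n \<ge> 1"
    and "rho_preorder n \<rho>"
    and "spanning_forest n \<rho> F"
  shows "D0 n \<rho> \<lhd> (UT n \<rho> :: ('a::field mat \<times> 'a mat) monoid)
    \<and> (\<forall>A \<in> RUnits n \<rho>. \<forall>B \<in> RUnits n \<rho>. \<forall>a \<in> Ggrp n \<rho> F.
          Cinn n \<rho> A = Cinn n \<rho> B \<longrightarrow>
          D0 n \<rho> #>\<^bsub>UT n \<rho>\<^esub> (A, a) = D0 n \<rho> #>\<^bsub>UT n \<rho>\<^esub> (B, a))
    \<and> Psi n \<rho> \<in> iso (IG n \<rho> F) (UT n \<rho> Mod D0 n \<rho>)"
proof -
  interpret incidence_preorder n \<rho> by unfold_locales (rule assms(2))
  show ?thesis
    using D0_normal Cinn_eq_imp_rcos_eq Ggrp_imp_Tgrp Psi_iso[OF assms(3)] by blast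
qed

end
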